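(* Every irreducible SDAN contains only one atom.
   Context: Fix a finite nonempty set $A$ of agents; each $a\in A$ has a nonempty set $Q_a$ of internal states, $Q_A=\prod_{a\in A}Q_a$. A transformer is a left-total relation on $Q_A$; for $S\subseteq A$ an $S$-transformer is one with $(q,q')\in\tau\Rightarrow q_a=q'_a$ for all $a\notin S$. An atom is $n=(P_n,R_n,\delta_n)$: $P_n\subseteq A$ nonempty (parties), $R_n$ finite nonempty (outcomes), $\delta_n$ assigns to each $r\in R_n$ a $P_n$-transformer $\langle n,r\rangle$. A negotiation is $\mathcal N=(N,n_0,n_f,\mathcal X)$ with $N$ a finite set of atoms, $n_0,n_f\in N$ (possibly equal), $T(N)=\{(n,a,r): n\in N,a\in P_n,r\in R_n\}$, $\mathcal X:T(N)\to 2^N$, such that every agent is a party of $n_0$ and of $n_f$, and $\mathcal X(n,a,r)=\emptyset$ iff $n=n_f$. Its graph has vertices $N$ and edges $(n,n')$ whenever $n'\in\mathcal X(n,a,r)$ for some $(n,a,r)$; $\mathcal N$ is acyclic if the graph has no cycle. A marking is $x:A\to 2^N$; initial $x_0(a)=\{n_0\}$, final $x_f(a)=\emptyset$. $x$ enables $n$ if $n\in x(a)$ for all $a\in P_n$; then for $r\in R_n$ the step $(n,r)$ leads to $x'$ with $x'(a)=\mathcal X(n,a,r)$ for $a\in P_n$, $x'(a)=x(a)$ otherwise. A large step is a finite occurrence sequence from $x_0$ to $x_f$. $\mathcal N$ is sound if every atom is enabled at some reachable marking and every occurrence sequence from $x_0$ is a large step or can be extended to one. An agent $a$ is deterministic if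 for each $(n,a,r)\in T(N)$ with $n\ne n_f$, $\mathcal X(n,a,r)$ is a singleton; $\mathcal N$ is deterministic if all agents are deterministic. An SDAN is a sound, deterministic, acyclic negotiation. Merge rule. Guard: some atom $n$ has distinct outcomes $r_1,r_2$ with $\mathcal X(n,a,r_1)=\mathcal X(n,a,r_2)$ for all $a\in P_n$. Action: replace $r_1,r_2$ in $R_n$ by a fresh outcome $r_f$ with $\mathcal X(n,a,r_f)=\mathcal X(n,a,r_1)$ for $a\in P_n$ and $\langle n,r_f\rangle=\langle n,r_1\rangle\cup\langle n,r_2\rangle$. $(n,r)$ unconditionally enables $n'$ if $P_n\supseteq P_{n'}$ and $\mathcal X(n,a,r)=\{n'\}$ for all $a\in P_{n'}$. d-shortcut rule. Guard: atoms $n\neq n'$ and $r\in R_n$ such that $(n,r)$ unconditionally enables $n'$; $n'$ has at most one outcome; and if $n'\in\mathcal X(\tilde n,\tilde a,\tilde r)$ for at least one $(\tilde n,\tilde a,\tilde r)\in T(N)$ with $\tilde n\neq n$, then $\{n'\}=\mathcal X(\tilde n,\tilde a,\tilde r)$ for some $(\tilde n,\tilde a,\tilde r)\in T(N)$ with $\tilde n\ne n$. Action: (1) replace $R_n$ by $(R_n\setminus\{r\})\cup\{r'_f:r'\in R_{n'}\}$ with fresh names; (2) for $a\in P_{n'}$ set $\mathcal X(n,a,r'_f)=\mathcal X(n',a,r')$, for $a\in P_n\setminus P_{n'}$ set $\mathcal X(n,a,r'_f)=\mathcal X(n,a,r)$; (3) $\langle n,r'_f\rangle=\langle n,r\rangle\langle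 n',r'\rangle$ (relational composition); (4) if afterwards $n'\notin\mathcal X(\tilde n,\tilde a,\tilde r)$ for all $(\tilde n,\tilde a,\tilde r)\in T(N)$, remove $n'$. An SDAN is irreducible if neither the merge rule nor the d-shortcut rule can be applied to it. *)

theory Defs
  imports "HOL-Library.FuncSet"
begin

record ('a, 'q, 'n, 'r) negotiation =
  atoms :: "'n set"
  init_atom :: 'n
  final_atom :: 'n
  parties :: "'n \<Rightarrow> 'a set"
  outcomes :: "'n \<Rightarrow> 'r set"
  trans_of :: "'n \<Rightarrow> 'r \<Rightarrow> (('a \<Rightarrow> 'q) \<times> ('a \<Rightarrow> 'q)) set"
  next_of :: "'n \<Rightarrow> 'a \<Rightarrow> 'r \<Rightarrow> 'n set"

definition global_states :: "'a set \<Rightarrow> ('a \<Rightarrow> 'q set) \<Rightarrow> ('a \<Rightarrow> 'q) set" where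
  "global_states A Q = Pi\<^sub>E A Q"

definition transformer :: "'a set \<Rightarrow> ('a \<Rightarrow> 'q set) \<Rightarrow> (('a \<Rightarrow> 'q) \<times> ('a \<Rightarrow> 'q)) set \<Rightarrow> bool" where
  "transformer A Q \<tau> \<longleftrightarrow> \<tau> \<subseteq> global_states A Q \<times> global_states A Q
     \<and> (\<forall>q\<in>global_states A Q. \<exists>q'. (q, q') \<in> \<tau>)"

definition S_transformer :: "'a set \<Rightarrow> ('a \<Rightarrow> 'q set) \<Rightarrow> 'a set \<Rightarrow> (('a \<Rightarrow> 'q) \<times> ('a \<Rightarrow> 'q)) set \<Rightarrow> bool" where
  "S_transformer A Q S \<tau> \<longleftrightarrow> transformer A Q \<tau>
     \<and> (\<forall>(q, q')\<in>\<tau>. \<forall>a\<in>A - S. q a = q' a)"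

definition Tset :: "('a, 'q, 'n, 'r) negotiation \<Rightarrow> ('n \<times> 'a \<times> 'r) set" where
  "Tset \<N> = {(n, a, r). n \<in> atoms \<N> \<and> a \<in> parties \<N> n \<and> r \<in> outcomes \<N> n}"

definition is_negotiation :: "'a set \<Rightarrow> ('a \<Rightarrow> 'q set) \<Rightarrow> ('a, 'q, 'n, 'r) negotiation \<Rightarrow> bool" where
  "is_negotiation A Q \<N> \<longleftrightarrow>
     finite A \<and> A \<noteq> {} \<and> (\<forall>a\<in>A. Q a \<noteq> {})
   \<and> finite (atoms \<N>) \<and> init_atom \<N> \<in> atoms \<N> \<and> final_atom \<N> \<in> atoms \<N>
   \<and> (\<forall>n\<in>atoms \<N>.
        parties \<N> n \<noteq> {} \<and> parties \<N> n \<subseteq> A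
      \<and> finite (outcomes \<N> n) \<and> outcomes \<N> n \<noteq> {}
      \<and> (\<forall>r\<in>outcomes \<N> n. S_transformer A Q (parties \<N> n) (trans_of \<N> n r)))
   \<and> A \<subseteq> parties \<N> (init_atom \<N>) \<and> A \<subseteq> parties \<N> (final_atom \<N>)
   \<and> (\<forall>(n, a, r)\<in>Tset \<N>. next_of \<N> n a r \<subseteq> atoms \<N>
        \<and> (next_of \<N> n a r = {} \<longleftrightarrow> n = final_atom \<N>))"

definition graph_edges :: "('a, 'q, 'n, 'r) negotiation \<Rightarrow> ('n \<times> 'n) set" where
  "graph_edges \<N> = {(n, n'). \<exists>a r. (n, a, r) \<in> Tset \<N> \<and> n' \<in> next_of \<N> n a r}"

definition acyclic_neg :: "('a, 'q, 'n, 'r) negotiation \<Rightarrow> bool" where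
  "acyclic_neg \<N> \<longleftrightarrow> acyclic (graph_edges \<N>)"

text \<open>Markings. Agents outside A carry the empty set throughout.\<close>
definition init_marking :: "'a set \<Rightarrow> ('a, 'q, 'n, 'r) negotiation \<Rightarrow> 'a \<Rightarrow> 'n set" where
  "init_marking A \<N> = (\<lambda>a. if a \<in> A then {init_atom \<N>} else {})"

definition final_marking :: "'a \<Rightarrow> 'n set" where
  "final_marking = (\<lambda>a. {})"

definition enables :: "('a, 'q, 'n, 'r) negotiation \<Rightarrow> ('a \<Rightarrow> 'n set) \<Rightarrow> 'n \<Rightarrow> bool" where
  "enables \<N> x n \<longleftrightarrow> (\<forall>a\<in>parties \<N> n. n \<in> x a)"

definition step :: "('a, 'q, 'n, 'r) negotiation \<Rightarrow> ('a \<Rightarrow> 'n set) \<Rightarrow> 'n \<times> 'r \<Rightarrow> ('a \<Rightarrow> 'n set) \<Rightarrow> bool" where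
  "step \<N> x nr x' \<longleftrightarrow> (case nr of (n, r) \<Rightarrow>
     n \<in> atoms \<N> \<and> r \<in> outcomes \<N> n \<and> enables \<N> x n
     \<and> x' = (\<lambda>a. if a \<in> parties \<N> n then next_of \<N> n a r else x a))"

fun run :: "('a, 'q, 'n, 'r) negotiation \<Rightarrow> ('a \<Rightarrow> 'n set) \<Rightarrow> ('n \<times> 'r) list \<Rightarrow> ('a \<Rightarrow> 'n set) \<Rightarrow> bool" where
  "run \<N> x [] x' \<longleftrightarrow> x' = x"
| "run \<N> x (s # \<sigma>) x' \<longleftrightarrow> (\<exists>y. step \<N> x s y \<and> run \<N> y \<sigma> x')"

definition reachable :: "'a set \<Rightarrow> ('a, 'q, 'n, 'r) negotiation \<Rightarrow> ('a \<Rightarrow> 'n set) \<Rightarrow> bool" where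
  "reachable A \<N> x \<longleftrightarrow> (\<exists>\<sigma>. run \<N> (init_marking A \<N>) \<sigma> x)"

definition large_step :: "'a set \<Rightarrow> ('a, 'q, 'n, 'r) negotiation \<Rightarrow> ('n \<times> 'r) list \<Rightarrow> bool" where
  "large_step A \<N> \<sigma> \<longleftrightarrow> run \<N> (init_marking A \<N>) \<sigma> final_marking"

definition sound :: "'a set \<Rightarrow> ('a, 'q, 'n, 'r) negotiation \<Rightarrow> bool" where
  "sound A \<N> \<longleftrightarrow>
     (\<forall>n\<in>atoms \<N>. \<exists>x. reachable A \<N> x \<and> enables \<N> x n)
   \<and> (\<forall>\<sigma> x. run \<N> (init_marking A \<N>) \<sigma> x \<longrightarrow>
        large_step A \<N> \<sigma> \<or> (\<exists>\<sigma>'. large_step A \<N> (\<sigma> @ \<sigma>')))"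

definition deterministic_agent :: "('a, 'q, 'n, 'r) negotiation \<Rightarrow> 'a \<Rightarrow> bool" where
  "deterministic_agent \<N> a \<longleftrightarrow>
     (\<forall>n r. (n, a, r) \<in> Tset \<N> \<and> n \<noteq> final_atom \<N> \<longrightarrow> (\<exists>n'. next_of \<N> n a r = {n'}))"

definition deterministic :: "'a set \<Rightarrow> ('a, 'q, 'n, 'r) negotiation \<Rightarrow> bool" where
  "deterministic A \<N> \<longleftrightarrow> (\<forall>a\<in>A. deterministic_agent \<N> a)"

definition SDAN :: "'a set \<Rightarrow> ('a \<Rightarrow> 'q set) \<Rightarrow> ('a, 'q, 'n, 'r) negotiation \<Rightarrow> bool" where
  "SDAN A Q \<N> \<longleftrightarrow> is_negotiation A Q \<N> \<and> sound A \<N> \<and> deterministic A \<N> \<and> acyclic_neg \<N>"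

definition merge_applicable :: "('a, 'q, 'n, 'r) negotiation \<Rightarrow> bool" where
  "merge_applicable \<N> \<longleftrightarrow>
     (\<exists>n\<in>atoms \<N>. \<exists>r1\<in>outcomes \<N> n. \<exists>r2\<in>outcomes \<N> n.
        r1 \<noteq> r2 \<and> (\<forall>a\<in>parties \<N> n. next_of \<N> n a r1 = next_of \<N> n a r2))"

definition uncond_enables :: "('a, 'q, 'n, 'r) negotiation \<Rightarrow> 'n \<Rightarrow> 'r \<Rightarrow> 'n \<Rightarrow> bool" where
  "uncond_enables \<N> n r n' \<longleftrightarrow>
     parties \<N> n' \<subseteq> parties \<N> n \<and> (\<forall>a\<in>parties \<N> n'. next_of \<N> n a r = {n'})"

definition dshortcut_applicable :: "('a, 'q, 'n, 'r) negotiation \<Rightarrow> bool" where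
  "dshortcut_applicable \<N> \<longleftrightarrow>
     (\<exists>n\<in>atoms \<N>. \<exists>n'\<in>atoms \<N>. \<exists>r\<in>outcomes \<N> n.
        n \<noteq> n' \<and> uncond_enables \<N> n r n' \<and> card (outcomes \<N> n') \<le> 1
      \<and> ((\<exists>(n1, a1, r1)\<in>Tset \<N>. n1 \<noteq> n \<and> n' \<in> next_of \<N> n1 a1 r1)
          \<longrightarrow> (\<exists>(n1, a1, r1)\<in>Tset \<N>. n1 \<noteq> n \<and> next_of \<N> n1 a1 r1 = {n'})))"

definition irreducible :: "'a set \<Rightarrow> ('a \<Rightarrow> 'q set) \<Rightarrow> ('a, 'q, 'n, 'r) negotiation \<Rightarrow> bool" where
  "irreducible A Q \<N> \<longleftrightarrow> SDAN A Q \<N> \<and> \<not> merge_applicable \<N> \<and> \<not> dshortcut_applicable \<N>"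

end

theory Submission
  imports Defs
begin

text \<open>If the initial atom is also the final one, the only reachable markings are the initial and
  the final marking, so soundness leaves room for no other atom. Otherwise irreducibility is
  contradicted. If no atom offers a choice, the outcome of the initial atom unconditionally enables
  the next atom of any run, and the d-shortcut rule applies. If some atom offers a choice, take one
  \<open>n\<close> whose strict successors offer none; by the merge rule two outcomes \<open>r\<^sub>1, r\<^sub>2\<close> of \<open>n\<close> send some
  agent to different atoms, so by acyclicity some atom occurs in a completing run after \<open>r\<^sub>1\<close> but
  in none after \<open>r\<^sub>2\<close>. Firing \<open>n\<close> at a marking that enables nothing else, the first such atom can
  only have received its tokens directly from \<open>(n, r\<^sub>1)\<close>: a token coming from elsewhere would be
  produced after \<open>r\<^sub>2\<close> as well, because below \<open>n\<close> every atom has a single outcome. So \<open>(n, r\<^sub>1)\<close>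
  unconditionally enables it and the d-shortcut rule applies again.\<close>

lemma finite_acyclic_obtains_maximal:
  assumes "finite r" "acyclic r" "x \<in> S"
  obtains m where "m \<in> S" "\<And>m'. (m, m') \<in> r\<^sup>+ \<Longrightarrow> m' \<notin> S"
proof -
  have "wf ((r\<^sup>+)\<inverse>)"
    using wf_trancl[OF finite_acyclic_wf_converse[OF assms(1,2)]] by (simp add: trancl_converse)
  then show ?thesis using assms(3) by (rule wfE_min) (use that in blast)
qed

locale sdan =
  fixes A :: "'a set" and Q :: "'a \<Rightarrow> 'q set" and N :: "('a, 'q, 'n, 'r) negotiation"
  assumes SDAN: "SDAN A Q N"
begin

abbreviation "V \<equiv> atoms N"
abbreviation "P \<equiv> parties N"
abbreviation "R \<equiv> outcomes N"
abbreviation "nx \<equiv> next_of N"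
abbreviation "E \<equiv> graph_edges N"
abbreviation "n0 \<equiv> init_atom N"
abbreviation "nf \<equiv> final_atom N"
abbreviation "x0 \<equiv> init_marking A N"

lemma negotiation: "is_negotiation A Q N"
  and soundness: "sound A N"
  and determinism: "deterministic A N"
  and acyclic_E: "acyclic E"
  using SDAN by (simp_all add: SDAN_def acyclic_neg_def)

lemma finite_agents: "finite A" and agents_nonempty: "A \<noteq> {}" and finite_atoms: "finite V"
  and init_atom_in_atoms: "n0 \<in> V" and agents_init: "A \<subseteq> P n0"
  using negotiation by (auto simp: is_negotiation_def)

lemma parties_nonempty: "n \<in> V \<Longrightarrow> P n \<noteq> {}"
  and parties_agents: "n \<in> V \<Longrightarrow> P n \<subseteq> A"
  and finite_outcomes: "n \<in> V \<Longrightarrow> finite (R n)"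
  and outcomes_nonempty: "n \<in> V \<Longrightarrow> R n \<noteq> {}"
  using negotiation by (auto simp: is_negotiation_def)

lemma unique_outcome: "n \<in> V \<Longrightarrow> card (R n) \<le> 1 \<Longrightarrow> r \<in> R n \<Longrightarrow> r' \<in> R n \<Longrightarrow> r = r'"
  using finite_outcomes card_le_Suc0_iff_eq by (metis One_nat_def)

lemma next_atoms: "n \<in> V \<Longrightarrow> a \<in> P n \<Longrightarrow> r \<in> R n \<Longrightarrow> nx n a r \<subseteq> V"
  using negotiation by (auto simp: is_negotiation_def Tset_def)

lemma next_empty_iff: "n \<in> V \<Longrightarrow> a \<in> P n \<Longrightarrow> r \<in> R n \<Longrightarrow> nx n a r = {} \<longleftrightarrow> n = nf"
  using negotiation by (auto simp: is_negotiation_def Tset_def)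

lemma next_singleton:
  assumes "n \<in> V" "a \<in> P n" "r \<in> R n" "n \<noteq> nf"
  obtains n' where "nx n a r = {n'}"
proof -
  have "a \<in> A" using assms(1,2) parties_agents by blast
  then have "\<exists>n'. nx n a r = {n'}" using determinism assms
    by (auto simp: deterministic_def deterministic_agent_def Tset_def)
  then show ?thesis using that by blast
qed

lemma next_eq_singleton:
  assumes "n \<in> V" "a \<in> P n" "r \<in> R n" "y \<in> nx n a r"
  shows "nx n a r = {y}"
proof -
  have "n \<noteq> nf" using next_empty_iff[OF assms(1-3)] assms(4) by blast
  then obtain n' where "nx n a r = {n'}" by (rule next_singleton[OF assms(1-3)])
  then show ?thesis using assms(4) by simp
qed

lemma edgeI: "n \<in> V \<Longrightarrow> a \<in> P n \<Longrightarrow> r \<in> R n \<Longrightarrow> v \<in> nx n a r \<Longrightarrow> (n, v) \<in> E"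
  by (auto simp: graph_edges_def Tset_def)

lemma edge_atoms: "(u, v) \<in> E \<Longrightarrow> u \<in> V \<and> v \<in> V"
  using next_atoms by (fastforce simp: graph_edges_def Tset_def)

lemma trancl_edge_atom: "(u, v) \<in> E\<^sup>+ \<Longrightarrow> v \<in> V"
  by (induction rule: trancl_induct) (auto dest: edge_atoms)

lemma rtrancl_Image_atoms: "S \<subseteq> V \<Longrightarrow> E\<^sup>* `` S \<subseteq> V"
  using trancl_edge_atom by (auto simp: rtrancl_eq_or_trancl)

lemma finite_edges: "finite E"
proof -
  have "E \<subseteq> V \<times> V" using edge_atoms by auto
  then show ?thesis using finite_atoms finite_subset by blast
qed

lemma no_cycle: "(u, u) \<notin> E\<^sup>+"
  using acyclic_E by (simp add: acyclic_def)

lemma dshortcut_applicableI: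
  assumes "n \<in> V" "r \<in> R n" "(n, y) \<in> E\<^sup>+" "uncond_enables N n r y" "card (R y) \<le> 1"
  shows "dshortcut_applicable N"
proof -
  have "nx n1 a1 r1 = {y}" if "(n1, a1, r1) \<in> Tset N" "y \<in> nx n1 a1 r1" for n1 a1 r1
    using that next_eq_singleton by (auto simp: Tset_def)
  then have "(\<exists>(n1, a1, r1)\<in>Tset N. n1 \<noteq> n \<and> y \<in> nx n1 a1 r1)
      \<longrightarrow> (\<exists>(n1, a1, r1)\<in>Tset N. n1 \<noteq> n \<and> nx n1 a1 r1 = {y})"
    by blast
  moreover have "n \<noteq> y" "y \<in> V" using assms(3) no_cycle trancl_edge_atom by auto
  ultimately show ?thesis
    unfolding dshortcut_applicable_def using assms by blast
qed

definition fire :: "('a \<Rightarrow> 'n set) \<Rightarrow> 'n \<Rightarrow> 'r \<Rightarrow> 'a \<Rightarrow> 'n set" where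
  "fire x n r = (\<lambda>a. if a \<in> P n then nx n a r else x a)"

lemma step_iff: "step N x (n, r) x' \<longleftrightarrow> n \<in> V \<and> r \<in> R n \<and> enables N x n \<and> x' = fire x n r"
  by (simp add: step_def fire_def)

lemma run_Cons_iff: "run N x ((n, r) # \<sigma>) z \<longleftrightarrow>
    n \<in> V \<and> r \<in> R n \<and> enables N x n \<and> run N (fire x n r) \<sigma> z"
  by (auto simp: step_iff)

lemma run_append: "run N x (\<sigma> @ \<tau>) z \<longleftrightarrow> (\<exists>y. run N x \<sigma> y \<and> run N y \<tau> z)"
  by (induction \<sigma> arbitrary: x) auto

lemma run_unique: "run N x \<sigma> y \<Longrightarrow> run N x \<sigma> y' \<Longrightarrow> y = y'"
  by (induction \<sigma> arbitrary: x) (auto simp: step_def split: prod.splits)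

lemma run_step_valid: "run N z \<sigma> z' \<Longrightarrow> (w, s) \<in> set \<sigma> \<Longrightarrow> w \<in> V \<and> s \<in> R w"
  by (induction \<sigma> arbitrary: z) (auto simp: step_def split: prod.splits)

lemma reachable_init: "reachable A N x0"
  unfolding reachable_def by (rule exI[of _ "[]"]) simp

lemma reachable_step: "reachable A N x \<Longrightarrow> step N x s y \<Longrightarrow> reachable A N y"
  unfolding reachable_def by (metis run.simps run_append)

lemma reachable_fire:
  "reachable A N x \<Longrightarrow> n \<in> V \<Longrightarrow> r \<in> R n \<Longrightarrow> enables N x n \<Longrightarrow> reachable A N (fire x n r)"
  using reachable_step step_iff by blast

lemma reachable_completes:
  assumes "reachable A N x"
  obtains \<rho> where "run N x \<rho> final_marking"
proof -
  obtain \<sigma> where \<sigma>: "run N x0 \<sigma> x" using assms unfolding reachable_def by blast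
  from soundness \<sigma> have "large_step A N \<sigma> \<or> (\<exists>\<sigma>'. large_step A N (\<sigma> @ \<sigma>'))"
    unfolding sound_def by blast
  then have "\<exists>\<rho>. run N x \<rho> final_marking"
  proof
    assume "large_step A N \<sigma>"
    then have "x = final_marking" using \<sigma> run_unique large_step_def by metis
    then show ?thesis by (intro exI[of _ "[]"]) simp
  next
    assume "\<exists>\<sigma>'. large_step A N (\<sigma> @ \<sigma>')"
    then show ?thesis using \<sigma> run_unique run_append by (metis large_step_def)
  qed
  then show ?thesis using that by blast
qed

subsection \<open>Tokens\<close>

definition single_token :: "('a \<Rightarrow> 'n set) \<Rightarrow> bool" where
  "single_token x \<longleftrightarrow> (\<forall>a. x a = {} \<or> (\<exists>m\<in>V. x a = {m})) \<and> (\<forall>a. a \<notin> A \<longrightarrow> x a = {})"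

lemma single_tokenD: "single_token x \<Longrightarrow> m \<in> x a \<Longrightarrow> x a = {m}"
  unfolding single_token_def by (metis empty_iff singletonD)

lemma single_token_atoms: "single_token x \<Longrightarrow> x a \<subseteq> V"
  unfolding single_token_def by (metis empty_subsetI insert_subset)

lemma single_token_step: assumes "single_token x" "step N x s y" shows "single_token y"
proof -
  obtain n r where "s = (n, r)" by fastforce
  then have st: "n \<in> V" "r \<in> R n" "y = fire x n r"
    using assms(2) step_iff by auto
  have "y a = {} \<or> (\<exists>m\<in>V. y a = {m})" for a
  proof (cases "a \<in> P n \<and> n \<noteq> nf")
    case True
    then obtain n' where "nx n a r = {n'}" using st(1,2) by (metis next_singleton)
    then show ?thesis using next_atoms[OF st(1) _ st(2)] st(3) True by (auto simp: fire_def)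
  next
    case False
    then show ?thesis using st assms(1) next_empty_iff[OF st(1) _ st(2)]
      by (auto simp: single_token_def fire_def)
  qed
  moreover have "y a = {}" if "a \<notin> A" for a
    using that st assms(1) parties_agents[OF st(1)] by (auto simp: single_token_def fire_def)
  ultimately show ?thesis unfolding single_token_def by blast
qed

lemma single_token_run: "run N x \<sigma> y \<Longrightarrow> single_token x \<Longrightarrow> single_token y"
  by (induction \<sigma> arbitrary: x) (auto intro: single_token_step)

lemma reachable_single_token: "reachable A N x \<Longrightarrow> single_token x"
proof -
  have "single_token x0" using init_atom_in_atoms by (auto simp: single_token_def init_marking_def)
  then show "reachable A N x \<Longrightarrow> single_token x"
    unfolding reachable_def using single_token_run by blast
qed

lemma run_to_final_consumes:
  "run N z \<sigma> final_marking \<Longrightarrow> z c = {y} \<Longrightarrow> y \<in> fst ` set \<sigma> \<and> c \<in> P y"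
proof (induction \<sigma> arbitrary: z)
  case Nil then show ?case by (auto simp: final_marking_def)
next
  case (Cons s \<sigma>)
  obtain n r where s: "s = (n, r)" by fastforce
  then have st: "enables N z n" "run N (fire z n r) \<sigma> final_marking"
    using Cons.prems run_Cons_iff by auto
  show ?case
  proof (cases "c \<in> P n")
    case True
    then have "n \<in> z c" using st(1) by (auto simp: enables_def)
    then show ?thesis using Cons.prems s True by auto
  next
    case False
    then show ?thesis using Cons.IH st(2) Cons.prems by (auto simp: fire_def)
  qed
qed

lemma produced_token_consumed:
  assumes "run N z \<sigma> final_marking" "(w, s) \<in> set \<sigma>" "c \<in> P w" "nx w c s = {y}"
  shows "y \<in> fst ` set \<sigma>"
proof -
  obtain \<sigma>a \<sigma>b where \<sigma>: "\<sigma> = \<sigma>a @ (w, s) # \<sigma>b" using assms(2) split_list by fastforce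
  then obtain za where "run N za ((w, s) # \<sigma>b) final_marking"
    using assms(1) run_append by auto
  then have "run N (fire za w s) \<sigma>b final_marking" using run_Cons_iff by blast
  moreover have "fire za w s c = {y}" using assms(3,4) by (simp add: fire_def)
  ultimately have "y \<in> fst ` set \<sigma>b" using run_to_final_consumes by blast
  then show ?thesis using \<sigma> by auto
qed

lemma token_origin: "run N x \<sigma> z \<Longrightarrow> y \<in> z c \<Longrightarrow>
    y \<in> x c \<or> (\<exists>w s. (w, s) \<in> set \<sigma> \<and> c \<in> P w \<and> y \<in> nx w c s)"
proof (induction \<sigma> arbitrary: x)
  case Nil then show ?case by simp
next
  case (Cons s \<sigma>)
  obtain n r where s: "s = (n, r)" by fastforce
  then have "run N (fire x n r) \<sigma> z" using Cons.prems run_Cons_iff by auto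
  from Cons.IH[OF this Cons.prems(2)] show ?case
    using s by (cases "c \<in> P n") (auto simp: fire_def)
qed

lemma fired_from_token:
  "run N z \<sigma> z' \<Longrightarrow> (y, s) \<in> set \<sigma> \<Longrightarrow> d \<in> P y \<Longrightarrow> \<exists>v\<in>z d. (v, y) \<in> E\<^sup>*"
proof (induction \<sigma> arbitrary: z)
  case Nil then show ?case by simp
next
  case (Cons st \<sigma>)
  obtain n r where s: "st = (n, r)" by fastforce
  then have st: "n \<in> V" "r \<in> R n" "enables N z n" "run N (fire z n r) \<sigma> z'"
    using Cons.prems run_Cons_iff by auto
  show ?case
  proof (cases "(y, s) = (n, r)")
    case True
    then show ?thesis using st(3) Cons.prems by (auto simp: enables_def)
  next
    case False
    then obtain v where v: "v \<in> fire z n r d" "(v, y) \<in> E\<^sup>*"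
      using Cons.IH st(4) Cons.prems s by auto
    show ?thesis
    proof (cases "d \<in> P n")
      case True
      then have "(n, v) \<in> E" "n \<in> z d"
        using v(1) st edgeI by (auto simp: fire_def enables_def)
      then show ?thesis using v(2) by (meson converse_rtrancl_into_rtrancl)
    qed (use v in \<open>auto simp: fire_def\<close>)
  qed
qed

subsection \<open>Markings enabling a single atom\<close>

text \<open>Each step strictly shrinks the set of pairs \<open>(a, w)\<close> such that the token of agent \<open>a\<close> can
  still reach atom \<open>w\<close>, since the fired atom is no longer reachable from its own parties.\<close>

definition potential :: "('a \<Rightarrow> 'n set) \<Rightarrow> ('a \<times> 'n) set" where
  "potential x = {(a, w). a \<in> A \<and> w \<in> E\<^sup>* `` x a}"

lemma finite_potential: "single_token x \<Longrightarrow> finite (potential x)"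
  using finite_subset[of "potential x" "A \<times> V"] finite_agents finite_atoms
    rtrancl_Image_atoms[OF single_token_atoms] by (fastforce simp: potential_def)

lemma potential_step_psubset:
  assumes x: "single_token x" and st: "step N x (m, r) y"
  shows "potential y \<subset> potential x"
proof -
  have m: "m \<in> V" "r \<in> R m" "enables N x m" "y = fire x m r"
    using st step_iff by auto
  have xm: "x a = {m}" if "a \<in> P m" for a
    using m(3) that single_tokenD[OF x] by (auto simp: enables_def)
  have succ: "(m, w) \<in> E\<^sup>+" if "a \<in> P m" "w \<in> E\<^sup>* `` nx m a r" for a w
    using that edgeI[OF m(1) _ m(2)] by (meson ImageE rtrancl_into_trancl2)
  have "potential y \<subseteq> potential x"
  proof
    fix p assume "p \<in> potential y"
    then obtain a w where p: "p = (a, w)" "a \<in> A" "w \<in> E\<^sup>* `` y a" by (auto simp: potential_def)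
    have "w \<in> E\<^sup>* `` x a"
    proof (cases "a \<in> P m")
      case True
      then have "(m, w) \<in> E\<^sup>+" using succ p(3) m(4) by (simp add: fire_def)
      then show ?thesis using xm[OF True] by (auto dest: trancl_into_rtrancl)
    qed (use p m(4) in \<open>simp add: fire_def\<close>)
    then show "p \<in> potential x" using p by (simp add: potential_def)
  qed
  moreover obtain a where "a \<in> P m" using parties_nonempty[OF m(1)] by blast
  then have "(a, m) \<in> potential x - potential y"
    using xm m(4) succ no_cycle parties_agents[OF m(1)] by (fastforce simp: potential_def fire_def)
  ultimately show ?thesis by blast
qed

definition enables_only :: "('a \<Rightarrow> 'n set) \<Rightarrow> 'n \<Rightarrow> bool" where
  "enables_only x n \<longleftrightarrow> enables N x n \<and> (\<forall>w\<in>V. enables N x w \<longrightarrow> w = n)"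

lemma reachable_enables_only:
  assumes "n \<in> V"
  obtains x where "reachable A N x" "enables_only x n"
proof -
  let ?good = "\<lambda>x. reachable A N x \<and> enables N x n"
  have "\<exists>x. ?good x" using soundness assms unfolding sound_def by blast
  then obtain x where x: "?good x"
    and least: "\<And>y. ?good y \<Longrightarrow> card (potential x) \<le> card (potential y)"
    using ex_has_least_nat[where P = ?good and m = "\<lambda>x. card (potential x)"] by blast
  have "w = n" if w: "w \<in> V" "enables N x w" for w
  proof (rule ccontr)
    assume "w \<noteq> n"
    obtain r where r: "r \<in> R w" using outcomes_nonempty[OF w(1)] by blast
    have tok: "single_token x" using x reachable_single_token by blast
    have "enables N (fire x w r) n"
      using x w \<open>w \<noteq> n\<close> single_tokenD[OF tok] by (fastforce simp: enables_def fire_def)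
    then have "card (potential x) \<le> card (potential (fire x w r))"
      using least reachable_fire x w r by blast
    moreover have "step N x (w, r) (fire x w r)" using w r step_iff by blast
    then have "card (potential (fire x w r)) < card (potential x)"
      by (intro psubset_card_mono finite_potential tok potential_step_psubset)
    ultimately show False by simp
  qed
  then show ?thesis using that x by (auto simp: enables_only_def)
qed

text \<open>After firing \<open>n\<close> at a marking that enables only \<open>n\<close>, every token lies strictly below \<open>n\<close>
  or is an untouched token of an agent outside \<open>P n\<close>; hence only strict successors of \<open>n\<close> fire.\<close>

definition below :: "('a \<Rightarrow> 'n set) \<Rightarrow> 'n \<Rightarrow> ('a \<Rightarrow> 'n set) \<Rightarrow> bool" where
  "below x n z \<longleftrightarrow> (\<forall>c. z c \<subseteq> E\<^sup>+ `` {n} \<or> (c \<notin> P n \<and> z c = x c))"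

lemma below_fire: "n \<in> V \<Longrightarrow> r \<in> R n \<Longrightarrow> below x n (fire x n r)"
  using edgeI by (fastforce simp: below_def fire_def)

lemma below_step:
  assumes only: "enables_only x n" and nV: "n \<in> V" and z: "below x n z" and st: "step N z (w, s) z'"
  shows "(n, w) \<in> E\<^sup>+ \<and> below x n z'"
proof -
  have w: "w \<in> V" "s \<in> R w" "enables N z w" "z' = fire z w s"
    using st step_iff by auto
  have nw: "(n, w) \<in> E\<^sup>+"
  proof (cases "\<exists>c\<in>P w. z c \<subseteq> E\<^sup>+ `` {n}")
    case True
    then show ?thesis using w(3) by (auto simp: enables_def)
  next
    case False
    then have h: "\<forall>c\<in>P w. c \<notin> P n \<and> z c = x c" using z by (auto simp: below_def)
    then have "w = n" using only w(1,3) by (auto simp: enables_def enables_only_def)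
    then show ?thesis using h parties_nonempty[OF nV] by blast
  qed
  moreover have "nx w c s \<subseteq> E\<^sup>+ `` {n}" if "c \<in> P w" for c
    using nw edgeI[OF w(1) that w(2)] by (auto intro: trancl_into_trancl)
  ultimately show ?thesis using z w(4) by (auto simp: below_def fire_def)
qed

lemma fired_after_enables_only:
  assumes "enables_only x n" "n \<in> V" "r \<in> R n"
    and "run N (fire x n r) \<sigma> z'" "(w, s) \<in> set \<sigma>"
  shows "(n, w) \<in> E\<^sup>+"
proof -
  have "below x n z \<Longrightarrow> run N z \<sigma> z' \<Longrightarrow> (w, s) \<in> set \<sigma> \<Longrightarrow> (n, w) \<in> E\<^sup>+" for z
  proof (induction \<sigma> arbitrary: z)
    case (Cons st \<sigma>)
    obtain m t where st: "st = (m, t)" by fastforce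
    then obtain z1 where z1: "step N z (m, t) z1" "run N z1 \<sigma> z'" using Cons.prems(2) by auto
    have "(n, m) \<in> E\<^sup>+" "below x n z1" using below_step[OF assms(1,2) Cons.prems(1) z1(1)] by auto
    then show ?case using Cons.IH[OF _ z1(2)] Cons.prems(3) st by auto
  qed simp
  then show ?thesis using assms below_fire by blast
qed

subsection \<open>Initial atom equal to the final atom\<close>

lemma reachable_init_final:
  assumes "n0 = nf" "reachable A N x"
  shows "x = x0 \<or> x = final_marking"
proof -
  have "run N z \<sigma> x \<Longrightarrow> z = x0 \<or> z = final_marking \<Longrightarrow> x = x0 \<or> x = final_marking" for z \<sigma>
  proof (induction \<sigma> arbitrary: z)
    case (Cons s \<sigma>)
    obtain m r where s: "s = (m, r)" by fastforce
    then have st: "m \<in> V" "r \<in> R m" "enables N z m" "run N (fire z m r) \<sigma> x"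
      using Cons.prems run_Cons_iff by auto
    obtain c where c: "c \<in> P m" using parties_nonempty[OF st(1)] by blast
    then have "m \<in> z c" "c \<in> A" using st(3) parties_agents[OF st(1)] by (auto simp: enables_def)
    then have "z = x0" "m = n0" using Cons.prems(2) by (auto simp: init_marking_def final_marking_def)
    then have "fire z m r = final_marking"
      using assms(1) agents_init next_empty_iff[OF st(1) _ st(2)]
      by (auto simp: fire_def init_marking_def final_marking_def fun_eq_iff)
    then show ?case using Cons.IH st(4) by blast
  qed simp
  then show ?thesis using assms(2) unfolding reachable_def by blast
qed

lemma init_final_single_atom:
  assumes "n0 = nf"
  shows "V = {n0}"
proof -
  have "w = n0" if w: "w \<in> V" for w
  proof -
    obtain x where x: "reachable A N x" "enables N x w" using soundness w by (auto simp: sound_def)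
    obtain c where c: "c \<in> P w" "c \<in> A" using parties_nonempty[OF w] parties_agents[OF w] by blast
    then have "w \<in> x c" using x(2) by (simp add: enables_def)
    then show ?thesis using reachable_init_final[OF assms x(1)] c
      by (auto simp: init_marking_def final_marking_def)
  qed
  then show ?thesis using init_atom_in_atoms by blast
qed

subsection \<open>Irreducibility forces the initial atom to be final\<close>

lemma first_unshared_atom_uncond_enabled:
  assumes only: "enables_only x n" and x: "reachable A N x" and nV: "n \<in> V"
    and succ: "\<And>m. (n, m) \<in> E\<^sup>+ \<Longrightarrow> card (R m) \<le> 1"
    and r1: "r1 \<in> R n" and r2: "r2 \<in> R n"
    and \<rho>1: "run N (fire x n r1) \<rho>1 final_marking" and \<rho>2: "run N (fire x n r2) \<rho>2 final_marking"
    and unshared: "\<exists>p\<in>set \<rho>1. fst p \<notin> fst ` set \<rho>2"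
  shows "\<exists>y. (n, y) \<in> E\<^sup>+ \<and> uncond_enables N n r1 y"
proof -
  obtain \<alpha> y s \<beta> where split: "\<rho>1 = \<alpha> @ (y, s) # \<beta>" and y: "y \<notin> fst ` set \<rho>2"
    and shared: "\<forall>p\<in>set \<alpha>. fst p \<in> fst ` set \<rho>2"
    using split_list_first_prop[OF unshared] by fastforce
  obtain z where \<alpha>: "run N (fire x n r1) \<alpha> z" and "run N z ((y, s) # \<beta>) final_marking"
    using \<rho>1 unfolding split run_append by blast
  then have "enables N z y" using run_Cons_iff by blast
  have ny: "(n, y) \<in> E\<^sup>+" using fired_after_enables_only[OF only nV r1 \<rho>1, of y s] split by simp
  have "c \<in> P n \<and> nx n c r1 = {y}" if c: "c \<in> P y" for c
  proof -
    have "y \<in> z c" using \<open>enables N z y\<close> c by (simp add: enables_def)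
    from token_origin[OF \<alpha> this] show ?thesis
    proof
      assume "y \<in> fire x n r1 c"
      moreover have "c \<notin> P n \<Longrightarrow> y \<in> x c \<Longrightarrow> y \<in> fst ` set \<rho>2"
        using run_to_final_consumes[OF \<rho>2] single_tokenD reachable_single_token[OF x]
        by (metis fire_def)
      ultimately show ?thesis using next_eq_singleton[OF nV _ r1] y
        by (auto simp: fire_def split: if_splits)
    next
      assume "\<exists>w s'. (w, s') \<in> set \<alpha> \<and> c \<in> P w \<and> y \<in> nx w c s'"
      then obtain w s' where ws: "(w, s') \<in> set \<alpha>" "c \<in> P w" "y \<in> nx w c s'" by blast
      obtain s'' where s'': "(w, s'') \<in> set \<rho>2" using shared ws(1) by force
      have ws1: "(w, s') \<in> set \<rho>1" using ws(1) split by simp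
      have w: "w \<in> V" "s' \<in> R w" using run_step_valid[OF \<rho>1 ws1] by auto
      have "s'' = s'"
        using unique_outcome[OF w(1) _ _ w(2)] succ fired_after_enables_only[OF only nV r1 \<rho>1 ws1]
          run_step_valid[OF \<rho>2 s''] by blast
      then have "y \<in> fst ` set \<rho>2"
        using produced_token_consumed[OF \<rho>2 s'' ws(2)] next_eq_singleton[OF w(1) ws(2) w(2) ws(3)]
        by simp
      with y show ?thesis by blast
    qed
  qed
  then show ?thesis using ny by (auto simp: uncond_enables_def)
qed

lemma choice_atom_uncond_enables:
  assumes nV: "n \<in> V" and choice: "1 < card (R n)" and nomerge: "\<not> merge_applicable N"
    and succ: "\<And>m. (n, m) \<in> E\<^sup>+ \<Longrightarrow> card (R m) \<le> 1"
  obtains r y where "r \<in> R n" "(n, y) \<in> E\<^sup>+" "uncond_enables N n r y"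
proof -
  obtain x where x: "reachable A N x" "enables_only x n" using reachable_enables_only[OF nV] .
  obtain r1 r2 where r: "r1 \<in> R n" "r2 \<in> R n" "r1 \<noteq> r2"
    using choice finite_outcomes[OF nV] card_le_Suc0_iff_eq by (metis One_nat_def not_le)
  then obtain d where d: "d \<in> P n" "nx n d r1 \<noteq> nx n d r2"
    using nomerge nV unfolding merge_applicable_def by blast
  then have "n \<noteq> nf" using next_empty_iff[OF nV] r by blast
  obtain t1 where t1: "nx n d r1 = {t1}" by (rule next_singleton[OF nV d(1) r(1) \<open>n \<noteq> nf\<close>])
  obtain t2 where t2: "nx n d r2 = {t2}" by (rule next_singleton[OF nV d(1) r(2) \<open>n \<noteq> nf\<close>])
  have fired: "reachable A N (fire x n r)" if "r \<in> R n" for r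
    using reachable_fire x(1) nV that x(2) unfolding enables_only_def by blast
  obtain \<rho>1 where \<rho>1: "run N (fire x n r1) \<rho>1 final_marking"
    by (rule reachable_completes[OF fired[OF r(1)]])
  obtain \<rho>2 where \<rho>2: "run N (fire x n r2) \<rho>2 final_marking"
    by (rule reachable_completes[OF fired[OF r(2)]])
  have d1: "fire x n r1 d = {t1}" using d(1) t1 by (simp add: fire_def)
  then have f1: "t1 \<in> fst ` set \<rho>1" "d \<in> P t1" using run_to_final_consumes[OF \<rho>1] by blast+
  have d2: "fire x n r2 d = {t2}" using d(1) t2 by (simp add: fire_def)
  then have f2: "t2 \<in> fst ` set \<rho>2" "d \<in> P t2" using run_to_final_consumes[OF \<rho>2] by blast+
  have "t1 \<notin> fst ` set \<rho>2 \<or> t2 \<notin> fst ` set \<rho>1"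
  proof (rule ccontr)
    assume "\<not> ?thesis"
    then obtain s1 s2 where "(t1, s1) \<in> set \<rho>2" "(t2, s2) \<in> set \<rho>1" by auto
    then have "(t2, t1) \<in> E\<^sup>*" "(t1, t2) \<in> E\<^sup>*"
      using fired_from_token[OF \<rho>2 _ f1(2)] fired_from_token[OF \<rho>1 _ f2(2)] d1 d2 by auto
    moreover have "t1 \<noteq> t2" using d(2) t1 t2 by simp
    ultimately have "(t1, t2) \<in> E\<^sup>+" "(t2, t1) \<in> E\<^sup>+" by (auto dest: rtranclD)
    then show False using no_cycle trancl_trans by metis
  qed
  then show ?thesis
  proof
    assume "t1 \<notin> fst ` set \<rho>2"
    then have "\<exists>p\<in>set \<rho>1. fst p \<notin> fst ` set \<rho>2" using f1(1) by auto
    then show ?thesis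
      using first_unshared_atom_uncond_enabled[OF x(2,1) nV succ r(1,2) \<rho>1 \<rho>2] r(1) that by blast
  next
    assume "t2 \<notin> fst ` set \<rho>1"
    then have "\<exists>p\<in>set \<rho>2. fst p \<notin> fst ` set \<rho>1" using f2(1) by auto
    then show ?thesis
      using first_unshared_atom_uncond_enabled[OF x(2,1) nV succ r(2,1) \<rho>2 \<rho>1] r(2) that by blast
  qed
qed

lemma init_uncond_enables:
  assumes "n0 \<noteq> nf" "r \<in> R n0"
  obtains y where "(n0, y) \<in> E\<^sup>+" "uncond_enables N n0 r y"
proof -
  have en: "enables N x0 n0"
    using parties_agents[OF init_atom_in_atoms] by (auto simp: enables_def init_marking_def)
  obtain \<rho> where \<rho>: "run N (fire x0 n0 r) \<rho> final_marking"
    using reachable_completes reachable_fire[OF reachable_init init_atom_in_atoms assms(2) en] by blast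
  obtain a where a: "a \<in> A" using agents_nonempty by blast
  have "fire x0 n0 r a \<noteq> {}"
    using next_empty_iff[OF init_atom_in_atoms _ assms(2)] agents_init a assms(1)
    by (auto simp: fire_def)
  then have "fire x0 n0 r \<noteq> final_marking" unfolding final_marking_def by meson
  then have "\<rho> \<noteq> []" using \<rho> by auto
  then obtain y s \<rho>' where "\<rho> = (y, s) # \<rho>'" by (metis list.exhaust prod.exhaust)
  then have y: "y \<in> V" "enables N (fire x0 n0 r) y" using \<rho> run_Cons_iff by auto
  have next_y: "nx n0 c r = {y}" if "c \<in> P y" for c
    using that y parties_agents[OF y(1)] agents_init next_eq_singleton[OF init_atom_in_atoms _ assms(2)]
    by (force simp: enables_def fire_def)
  obtain c where "c \<in> P y" using parties_nonempty[OF y(1)] by blast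
  then have "(n0, y) \<in> E\<^sup>+"
    using edgeI[OF init_atom_in_atoms _ assms(2)] next_y parties_agents[OF y(1)] agents_init by blast
  moreover have "uncond_enables N n0 r y"
    using next_y parties_agents[OF y(1)] agents_init by (auto simp: uncond_enables_def)
  ultimately show ?thesis using that by blast
qed

lemma irreducible_init_final:
  assumes "\<not> merge_applicable N" "\<not> dshortcut_applicable N"
  shows "n0 = nf"
proof (rule ccontr)
  assume nf: "n0 \<noteq> nf"
  let ?choice = "{m \<in> V. 1 < card (R m)}"
  show False
  proof (cases "?choice = {}")
    case False
    then obtain m where "m \<in> ?choice" by blast
    then obtain n where n: "n \<in> ?choice" and max: "\<And>m'. (n, m') \<in> E\<^sup>+ \<Longrightarrow> m' \<notin> ?choice"
      by (rule finite_acyclic_obtains_maximal[OF finite_edges acyclic_E]) blast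
    have succ: "card (R m') \<le> 1" if "(n, m') \<in> E\<^sup>+" for m'
      using max[OF that] trancl_edge_atom[OF that] by simp
    obtain r y where "r \<in> R n" "(n, y) \<in> E\<^sup>+" "uncond_enables N n r y"
      using n assms(1) succ by (blast elim: choice_atom_uncond_enables)
    then show False using dshortcut_applicableI n succ assms(2) by blast
  next
    case True
    obtain r where r: "r \<in> R n0" using outcomes_nonempty[OF init_atom_in_atoms] by blast
    obtain y where y: "(n0, y) \<in> E\<^sup>+" "uncond_enables N n0 r y"
      by (rule init_uncond_enables[OF nf r])
    have "card (R y) \<le> 1" using True trancl_edge_atom[OF y(1)] by auto
    then show False using dshortcut_applicableI[OF init_atom_in_atoms r y] assms(2) by blast
  qed
qed

end

theorem theorem5:
  fixes A :: "'a set" and Q :: "'a \<Rightarrow> 'q set" and \<N> :: "('a, 'q, 'n, 'r) negotiation"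
  assumes "SDAN A Q \<N>" and "irreducible A Q \<N>"
  shows "card (atoms \<N>) = 1"
proof -
  interpret sdan A Q \<N> using assms(1) by unfold_locales
  have "init_atom \<N> = final_atom \<N>"
    using irreducible_init_final assms(2) by (simp add: irreducible_def)
  then show ?thesis using init_final_single_atom by simp
qed

end
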